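(* Let $G=(F\cup C,E)$ be a finite bipartite graph with $F\neq\emptyset$, no isolated vertices, and $n:=|F|+|C|$. If $|E|\ge n\sqrt n$, then the expected number of clients removed in one iteration of FacilitySelect on $G$ is at least $\sqrt{|C|}$.
   Context: Let $G=(F\cup C,E)$ be a finite bipartite graph with parts $F$ (facilities) and $C$ (clients). The facility graph $G_F=(F,E_F)$ has an edge $\{i,i'\}$ ($i\ne i'$) iff $i$ and $i'$ have a common neighbor in $G$. Write $\deg(\cdot)$, $N(\cdot)$ for degree/neighborhood in $G$, $\deg_F(\cdot)$, $N_F(\cdot)$ for those in $G_F$. One iteration of FacilitySelect: every $i\in F$ independently draws $r_i$ uniformly from $[0,1]$; let $I=\{i\in F: r_i>\max_{i'\in N_F(i)} r_{i'}\}$ (the maximum over the empty set being $-\infty$); then all vertices of $I\cup N(I)$ are deleted from $G$ together with all their incident edges. "Clients removed" are the clients in $N(I)$. FacilitySelect repeats iterations while $F\ne\emptyset$. *)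

theory Defs
  imports "HOL-Probability.Probability"
begin

definition nbr :: "('f \<times> 'c) set \<Rightarrow> 'f \<Rightarrow> 'c set" where
  "nbr E i = {j. (i, j) \<in> E}"

definition nbrF :: "'f set \<Rightarrow> ('f \<times> 'c) set \<Rightarrow> 'f \<Rightarrow> 'f set" where
  "nbrF F E i = {i' \<in> F. i' \<noteq> i \<and> (\<exists>j. (i, j) \<in> E \<and> (i', j) \<in> E)}"

text \<open>The set I selected in one iteration for the random values r
  (a facility is selected iff its value strictly exceeds those of all its
  G_F-neighbours; the max over the empty set is -infinity).\<close>
definition selected :: "'f set \<Rightarrow> ('f \<times> 'c) set \<Rightarrow> ('f \<Rightarrow> real) \<Rightarrow> 'f set" where
  "selected F E r = {i \<in> F. \<forall>i' \<in> nbrF F E i. r i' < r i}"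

definition clients_removed :: "'f set \<Rightarrow> 'c set \<Rightarrow> ('f \<times> 'c) set \<Rightarrow> ('f \<Rightarrow> real) \<Rightarrow> 'c set" where
  "clients_removed F C E r = {j \<in> C. \<exists>i \<in> selected F E r. (i, j) \<in> E}"

definition rand_space :: "'f set \<Rightarrow> ('f \<Rightarrow> real) measure" where
  "rand_space F = PiM F (\<lambda>_. uniform_measure lborel {0..1::real})"

end

theory Submission imports Defs begin

(* Write wins S i r for the indicator that r i strictly exceeds every r i'
   with i' in S.  A facility i is selected iff wins (N_F(i)) i r, and two selected
   facilities never share a client (otherwise each would have to beat the other).
   Hence the number of removed clients is exactly  sum_{i in F} deg(i) * wins (N_F(i)) i r.
   For independent uniform values, conditioning on r i = y gives
   P(wins S i) = integral_0^1 y^|S| dy = 1/(|S|+1), so by linearity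
     E[#removed] = sum_{i in F} deg(i) / (deg_F(i) + 1)  >=  |E| / |F|,
   using deg_F(i) <= |F| - 1.  Finally |E| >= n sqrt n >= |F| sqrt |C|. *)

abbreviation unif01 :: "real measure" where
  "unif01 \<equiv> uniform_measure lborel {0..1::real}"

lemma prob_space_unif01: "prob_space unif01"
  by (rule prob_space_uniform_measure) auto

lemma nn_integral_power_interval:
  "(\<integral>\<^sup>+y. ennreal (y ^ k) * indicator {0..1::real} y \<partial>lborel) = ennreal (1 / (real k + 1))"
proof -
  let ?P = "\<lambda>x::real. x ^ Suc k / Suc k"
  have "((\<lambda>y::real. y ^ k) has_integral (?P 1 - ?P 0)) {0..1}"
  proof (rule fundamental_theorem_of_calculus)
    fix x :: real
    have "((\<lambda>x. x ^ Suc k) has_real_derivative real (Suc k) * x ^ k) (at x)"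
      using DERIV_pow[of "Suc k" x] by simp
    then have "(?P has_real_derivative real (Suc k) * x ^ k / Suc k) (at x)"
      by (rule DERIV_cdivide)
    then have "(?P has_real_derivative x ^ k) (at x within {0..1})"
      by (simp del: of_nat_Suc add: has_field_derivative_at_within)
    then show "(?P has_vector_derivative x ^ k) (at x within {0..1})"
      by (simp add: has_real_derivative_iff_has_vector_derivative)
  qed simp
  then have "((\<lambda>y::real. y ^ k) has_integral (1 / (real k + 1))) {0..1}"
    by (simp add: add.commute)
  then show ?thesis
    by (rule nn_integral_has_integral_lebesgue'[rotated]) auto
qed

lemma emeasure_unif01_lessThan:
  assumes "0 \<le> y" "y \<le> 1"
  shows "emeasure unif01 {..<y} = ennreal y"
proof -
  have "{0..1} \<inter> {..<y} = {0..<y}" using assms by auto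
  then show ?thesis using assms by (simp add: divide_ennreal_def)
qed

text \<open>If y is uniform, the probability P(Y < y)^k averages to 1/(k+1): this is the
  probability that y beats k further independent uniform values.\<close>
lemma nn_integral_cdf_power_unif01:
  "(\<integral>\<^sup>+y. emeasure unif01 {..<y} ^ k \<partial>unif01) = ennreal (1 / (real k + 1))"
proof -
  have "(\<integral>\<^sup>+y. emeasure unif01 {..<y} ^ k \<partial>unif01) = (\<integral>\<^sup>+y. ennreal (y ^ k) \<partial>unif01)"
  proof (rule nn_integral_cong_AE)
    show "AE y in unif01. emeasure unif01 {..<y} ^ k = ennreal (y ^ k)"
      by (rule AE_uniform_measureI)
        (auto simp: emeasure_unif01_lessThan ennreal_power simp del: emeasure_uniform_measure)
  qed
  also have "\<dots> = (\<integral>\<^sup>+y. ennreal (y ^ k) * indicator {0..1::real} y \<partial>lborel)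
                    / emeasure lborel {0..1::real}"
    by (rule nn_integral_uniform_measure) auto
  also have "\<dots> = ennreal (1 / (real k + 1))"
    using nn_integral_power_interval by (simp add: divide_ennreal_def)
  finally show ?thesis .
qed

definition wins :: "'f set \<Rightarrow> 'f \<Rightarrow> ('f \<Rightarrow> real) \<Rightarrow> real" where
  "wins S i r = (if \<forall>i'\<in>S. r i' < r i then 1 else 0)"

lemma wins_nonneg: "0 \<le> wins S i r"
  by (simp add: wins_def)

text \<open>Once r i = y is fixed, winning factorises into independent events r i' < y.\<close>
lemma prod_indicator_eq_all:
  assumes "finite G" "S \<subseteq> G"
  shows "(\<Prod>i'\<in>G. if i' \<in> S then indicator {..<y} (x i') else (1::ennreal))
           = ennreal (if \<forall>i'\<in>S. x i' < (y::real) then 1 else 0)"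
proof (cases "\<forall>i'\<in>S. x i' < y")
  case True
  then have "(\<Prod>i'\<in>G. if i' \<in> S then indicator {..<y} (x i') else (1::ennreal)) = (\<Prod>i'\<in>G. 1)"
    by (intro prod.cong) auto
  then show ?thesis using True by simp
next
  case False
  then obtain j where j: "j \<in> S" "\<not> x j < y" by auto
  then have "(\<Prod>i'\<in>G. if i' \<in> S then indicator {..<y} (x i') else (1::ennreal)) = 0"
    using assms by (intro prod_zero) (auto intro!: bexI[of _ j])
  with False show ?thesis by (simp only: if_False ennreal_0)
qed

lemma wins_measurable:
  assumes "finite F" "i \<in> F" "S \<subseteq> F"
  shows "wins S i \<in> borel_measurable (PiM F (\<lambda>_. unif01))"
proof -
  have "finite S" using assms finite_subset by blast
  then have "Measurable.pred (PiM F (\<lambda>_. unif01)) (\<lambda>r. \<forall>i'\<in>S. r i' < r i)"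
  proof (rule pred_intros_finite)
    fix i' assume "i' \<in> S"
    then have "i' \<in> F" using assms by auto
    then show "Measurable.pred (PiM F (\<lambda>_. unif01)) (\<lambda>r. r i' < r i)"
      using assms(2) by measurable
  qed
  then show ?thesis unfolding wins_def by measurable
qed

lemma nn_integral_wins:
  assumes "finite F" "i \<in> F" "S \<subseteq> F - {i}"
  shows "(\<integral>\<^sup>+r. ennreal (wins S i r) \<partial>rand_space F) = ennreal (1 / (real (card S) + 1))"
proof -
  interpret P: product_prob_space "\<lambda>_. unif01"
    by (rule product_prob_spaceI) (rule prob_space_unif01)
  define G where "G = F - {i}"
  have G: "F = insert i G" "i \<notin> G" "S \<subseteq> G" "finite G"
    using assms unfolding G_def by auto
  have meas: "(\<lambda>r. ennreal (wins S i r)) \<in> borel_measurable (PiM (insert i G) (\<lambda>_. unif01))"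
  proof (rule measurable_compose[OF _ measurable_ennreal])
    have "wins S i \<in> borel_measurable (PiM F (\<lambda>_. unif01))"
      using assms(3) by (intro wins_measurable[OF assms(1,2)]) blast
    then show "wins S i \<in> borel_measurable (PiM (insert i G) (\<lambda>_. unif01))"
      by (simp only: G(1))
  qed
  have conditional: "(\<integral>\<^sup>+x. ennreal (wins S i (x(i := y))) \<partial>PiM G (\<lambda>_. unif01))
                       = emeasure unif01 {..<y} ^ card S" for y
  proof -
    have "(\<integral>\<^sup>+x. ennreal (wins S i (x(i := y))) \<partial>PiM G (\<lambda>_. unif01))
        = (\<integral>\<^sup>+x. (\<Prod>i'\<in>G. if i' \<in> S then indicator {..<y} (x i') else 1) \<partial>PiM G (\<lambda>_. unif01))"
    proof (rule nn_integral_cong)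
      fix x
      have "wins S i (x(i := y)) = (if \<forall>i'\<in>S. x i' < y then 1 else 0)"
        using G unfolding wins_def by auto
      then show "ennreal (wins S i (x(i := y)))
                   = (\<Prod>i'\<in>G. if i' \<in> S then indicator {..<y} (x i') else 1)"
        using prod_indicator_eq_all[OF G(4,3)] by simp
    qed
    also have "\<dots> = (\<Prod>i'\<in>G. \<integral>\<^sup>+t. (if i' \<in> S then indicator {..<y} t else 1) \<partial>unif01)"
      by (rule P.product_nn_integral_prod) (auto simp: G)
    also have "\<dots> = (\<Prod>i'\<in>G. if i' \<in> S then emeasure unif01 {..<y} else 1)"
    proof (rule prod.cong[OF refl])
      fix i' assume "i' \<in> G"
      show "(\<integral>\<^sup>+t. (if i' \<in> S then indicator {..<y} t else 1) \<partial>unif01)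
              = (if i' \<in> S then emeasure unif01 {..<y} else 1)"
        using prob_space.emeasure_space_1[OF prob_space_unif01]
        by (cases "i' \<in> S") (simp_all del: emeasure_uniform_measure)
    qed
    also have "\<dots> = emeasure unif01 {..<y} ^ card S"
      using G by (simp add: prod.If_cases Int_absorb1 Int_commute)
    finally show ?thesis .
  qed
  have "(\<integral>\<^sup>+r. ennreal (wins S i r) \<partial>rand_space F)
          = (\<integral>\<^sup>+y. (\<integral>\<^sup>+x. ennreal (wins S i (x(i := y))) \<partial>PiM G (\<lambda>_. unif01)) \<partial>unif01)"
    unfolding rand_space_def G(1)
    by (rule P.product_nn_integral_insert_rev[OF G(4,2) meas])
  also have "\<dots> = (\<integral>\<^sup>+y. emeasure unif01 {..<y} ^ card S \<partial>unif01)"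
    by (simp only: conditional)
  also have "\<dots> = ennreal (1 / (real (card S) + 1))"
    by (rule nn_integral_cdf_power_unif01)
  finally show ?thesis .
qed

lemma expectation_wins:
  assumes "finite F" "i \<in> F" "S \<subseteq> F - {i}"
  shows "integrable (rand_space F) (wins S i)"
    and "(\<integral>r. wins S i r \<partial>rand_space F) = 1 / (real (card S) + 1)"
proof -
  have meas: "wins S i \<in> borel_measurable (rand_space F)"
    using wins_measurable[OF assms(1,2)] assms(3) unfolding rand_space_def by auto
  note nn = nn_integral_wins[OF assms]
  show "integrable (rand_space F) (wins S i)"
    by (rule integrableI_nonneg[OF meas]) (auto simp: nn wins_nonneg)
  show "(\<integral>r. wins S i r \<partial>rand_space F) = 1 / (real (card S) + 1)"
    by (subst integral_eq_nn_integral[OF meas]) (auto simp: nn wins_nonneg)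
qed

lemma nbrF_subset: "nbrF F E i \<subseteq> F - {i}"
  unfolding nbrF_def by auto

lemma selected_iff_wins: "i \<in> selected F E r \<longleftrightarrow> i \<in> F \<and> wins (nbrF F E i) i r = 1"
  unfolding selected_def wins_def by auto

text \<open>Selected facilities form an independent set of G_F, so their client
  neighbourhoods are pairwise disjoint.\<close>
lemma selected_nbr_disjoint:
  assumes "i \<in> selected F E r" "i' \<in> selected F E r" "i \<noteq> i'"
  shows "nbr E i \<inter> nbr E i' = {}"
proof (rule ccontr)
  assume "nbr E i \<inter> nbr E i' \<noteq> {}"
  then obtain j where "(i, j) \<in> E" "(i', j) \<in> E" unfolding nbr_def by auto
  then have "i' \<in> nbrF F E i" "i \<in> nbrF F E i'"
    using assms unfolding nbrF_def selected_def by auto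
  then have "r i' < r i" "r i < r i'" using assms(1,2) unfolding selected_def by auto
  then show False by simp
qed

lemma card_clients_removed:
  assumes "finite F" "finite C" "E \<subseteq> F \<times> C"
  shows "real (card (clients_removed F C E r))
           = (\<Sum>i\<in>F. real (card (nbr E i)) * wins (nbrF F E i) i r)"
proof -
  have fin_nbr: "finite (nbr E i)" for i
    using assms(3) unfolding nbr_def by (intro finite_subset[OF _ assms(2)]) auto
  have sel_sub: "selected F E r \<subseteq> F" unfolding selected_def by auto
  have removed_eq: "clients_removed F C E r = (\<Union>i\<in>selected F E r. nbr E i)"
    using assms(3) unfolding clients_removed_def nbr_def selected_def by auto
  have "card (clients_removed F C E r) = (\<Sum>i\<in>selected F E r. card (nbr E i))"
    unfolding removed_eq
  proof (rule card_UN_disjoint)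
    show "finite (selected F E r)" using finite_subset[OF sel_sub assms(1)] .
    show "\<forall>i\<in>selected F E r. finite (nbr E i)" using fin_nbr by blast
    show "\<forall>i\<in>selected F E r. \<forall>i'\<in>selected F E r. i \<noteq> i' \<longrightarrow> nbr E i \<inter> nbr E i' = {}"
      by (intro ballI impI selected_nbr_disjoint)
  qed
  then have "real (card (clients_removed F C E r))
      = (\<Sum>i\<in>selected F E r. real (card (nbr E i)) * wins (nbrF F E i) i r)"
    by (simp add: selected_iff_wins)
  also have "\<dots> = (\<Sum>i\<in>F. real (card (nbr E i)) * wins (nbrF F E i) i r)"
  proof (rule sum.mono_neutral_left[OF assms(1) sel_sub])
    show "\<forall>i\<in>F - selected F E r. real (card (nbr E i)) * wins (nbrF F E i) i r = 0"
      by (auto simp: selected_def wins_def)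
  qed
  finally show ?thesis .
qed

lemma expected_clients_removed:
  assumes "finite F" "finite C" "E \<subseteq> F \<times> C"
  shows "(\<integral>r. real (card (clients_removed F C E r)) \<partial>rand_space F)
           = (\<Sum>i\<in>F. real (card (nbr E i)) / (real (card (nbrF F E i)) + 1))"
proof -
  note wins_i = expectation_wins[OF assms(1) _ nbrF_subset]
  have "(\<integral>r. real (card (clients_removed F C E r)) \<partial>rand_space F)
          = (\<integral>r. (\<Sum>i\<in>F. real (card (nbr E i)) * wins (nbrF F E i) i r) \<partial>rand_space F)"
    by (simp only: card_clients_removed[OF assms])
  also have "\<dots> = (\<Sum>i\<in>F. \<integral>r. real (card (nbr E i)) * wins (nbrF F E i) i r \<partial>rand_space F)"
    by (rule Bochner_Integration.integral_sum) (use wins_i in auto)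
  also have "\<dots> = (\<Sum>i\<in>F. real (card (nbr E i)) / (real (card (nbrF F E i)) + 1))"
    by (rule sum.cong) (simp_all add: wins_i)
  finally show ?thesis .
qed

lemma card_edges_sum_degrees:
  assumes "finite F" "finite C" "E \<subseteq> F \<times> C"
  shows "card E = (\<Sum>i\<in>F. card (nbr E i))"
proof -
  have "E = Sigma F (nbr E)" using assms(3) unfolding nbr_def by auto
  moreover have "finite (nbr E i)" for i
    using assms(2,3) finite_subset[of "nbr E i" C] unfolding nbr_def by auto
  ultimately show ?thesis using card_SigmaI[OF assms(1), of "nbr E"] by simp
qed

text \<open>Each facility-graph degree is at most |F| - 1, so the expectation is at least the
  average facility degree |E|/|F|.\<close>
lemma expected_clients_removed_ge_avg_degree:
  assumes "finite F" "finite C" "E \<subseteq> F \<times> C" "F \<noteq> {}"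
  shows "real (card E) / real (card F)
           \<le> (\<integral>r. real (card (clients_removed F C E r)) \<partial>rand_space F)"
proof -
  have "real (card E) / real (card F) = (\<Sum>i\<in>F. real (card (nbr E i)) / real (card F))"
    by (simp add: card_edges_sum_degrees[OF assms(1-3)] sum_divide_distrib)
  also have "\<dots> \<le> (\<Sum>i\<in>F. real (card (nbr E i)) / (real (card (nbrF F E i)) + 1))"
  proof (rule sum_mono)
    fix i assume "i \<in> F"
    have "card (nbrF F E i) \<le> card (F - {i})"
      using assms(1) nbrF_subset[of F E i] by (intro card_mono) auto
    moreover have "card (F - {i}) + 1 = card F"
      using card.remove[OF assms(1) \<open>i \<in> F\<close>] by simp
    ultimately have "real (card (nbrF F E i)) + 1 \<le> real (card F)"
      by linarith
    then show "real (card (nbr E i)) / real (card F)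
                 \<le> real (card (nbr E i)) / (real (card (nbrF F E i)) + 1)"
      by (intro divide_left_mono) auto
  qed
  also have "\<dots> = (\<integral>r. real (card (clients_removed F C E r)) \<partial>rand_space F)"
    by (rule expected_clients_removed[OF assms(1-3), symmetric])
  finally show ?thesis .
qed

theorem lemma5:
  fixes F :: "'f set" and C :: "'c set" and E :: "('f \<times> 'c) set"
  assumes "finite F" and "finite C"
    and "E \<subseteq> F \<times> C"
    and "F \<noteq> {}"
    and "\<forall>i\<in>F. \<exists>j. (i, j) \<in> E"
    and "\<forall>j\<in>C. \<exists>i. (i, j) \<in> E"
    and "real (card E) \<ge> real (card F + card C) * sqrt (real (card F + card C))"
  shows "(\<integral>r. real (card (clients_removed F C E r)) \<partial>rand_space F) \<ge> sqrt (real (card C))"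
proof -
  have F_pos: "real (card F) > 0" using assms(1,4) by (simp add: card_gt_0_iff)
  have "real (card F) * sqrt (real (card C))
          \<le> real (card F + card C) * sqrt (real (card F + card C))"
    by (intro mult_mono) auto
  then have "sqrt (real (card C)) \<le> real (card E) / real (card F)"
    using assms(7) F_pos by (simp add: field_simps)
  also have "\<dots> \<le> (\<integral>r. real (card (clients_removed F C E r)) \<partial>rand_space F)"
    by (rule expected_clients_removed_ge_avg_degree[OF assms(1-4)])
  finally show ?thesis .
qed

end
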